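(* For any unit square graph $G$, if $\mathcal{B}=\{N[v]\mid v\in V(G)\}$, then NCTD$^+(\mathcal{B})\le 4$.
   Context: A unit square graph is the intersection graph of a finite family of axis-parallel unit squares in the plane. $N[v]$ is the closed neighborhood of $v$. A positive teaching map for $\mathcal{B}$ assigns to each $B\in\mathcal{B}$ a set $T(B)\subseteq B$. A vertex $w$ distinguishes $B,B'$ if $w$ lies in exactly one of them. $T$ is non-clashing if for all distinct $B,B'\in\mathcal{B}$ some $w\in T(B)\cup T(B')$ distinguishes them; its size is $\max_{B\in\mathcal{B}}|T(B)|$. NCTD$^+(\mathcal{B})$ is the minimum size of a positive non-clashing teaching map for $\mathcal{B}$. *)

theory Defs
  imports Main "HOL-Analysis.Analysis"
begin

definition unit_square :: "real \<times> real \<Rightarrow> (real \<times> real) set" where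
  "unit_square c = {p. fst c \<le> fst p \<and> fst p \<le> fst c + 1 \<and> snd c \<le> snd p \<and> snd p \<le> snd c + 1}"

definition usq_adj :: "('v \<Rightarrow> real \<times> real) \<Rightarrow> 'v \<Rightarrow> 'v \<Rightarrow> bool" where
  "usq_adj c u v \<longleftrightarrow> u \<noteq> v \<and> unit_square (c u) \<inter> unit_square (c v) \<noteq> {}"

definition closed_nbhd :: "'v set \<Rightarrow> ('v \<Rightarrow> 'v \<Rightarrow> bool) \<Rightarrow> 'v \<Rightarrow> 'v set" where
  "closed_nbhd V E v = {u \<in> V. u = v \<or> E v u}"

definition distinguishes :: "'v \<Rightarrow> 'v set \<Rightarrow> 'v set \<Rightarrow> bool" where
  "distinguishes w B B' \<longleftrightarrow> (w \<in> B) \<noteq> (w \<in> B')"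

definition positive_teaching_map :: "'v set set \<Rightarrow> ('v set \<Rightarrow> 'v set) \<Rightarrow> bool" where
  "positive_teaching_map \<B> T \<longleftrightarrow> (\<forall>B\<in>\<B>. T B \<subseteq> B)"

definition non_clashing :: "'v set set \<Rightarrow> ('v set \<Rightarrow> 'v set) \<Rightarrow> bool" where
  "non_clashing \<B> T \<longleftrightarrow>
     (\<forall>B\<in>\<B>. \<forall>B'\<in>\<B>. B \<noteq> B' \<longrightarrow> (\<exists>w \<in> T B \<union> T B'. distinguishes w B B'))"

definition teaching_size_le :: "'v set set \<Rightarrow> ('v set \<Rightarrow> 'v set) \<Rightarrow> nat \<Rightarrow> bool" where
  "teaching_size_le \<B> T k \<longleftrightarrow> (\<forall>B\<in>\<B>. finite (T B) \<and> card (T B) \<le> k)"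

definition NCTD_plus :: "'v set set \<Rightarrow> nat" where
  "NCTD_plus \<B> = (LEAST k. \<exists>T. positive_teaching_map \<B> T \<and> non_clashing \<B> T \<and> teaching_size_le \<B> T k)"

end

theory Submission
  imports Defs
begin

text \<open>Two unit squares meet iff their corners are at sup-distance at most 1, so a closed
  neighbourhood N[v] is cut out of V by the four inequalities \<open>f u \<ge> f v - 1\<close> for the
  coordinate functionals \<open>f = \<plusminus>x, \<plusminus>y\<close> of the corners. For any family of sets cut out of V by
  lower bounds on a fixed set F of functionals, teaching each set by its minimisers of the
  members of F is non-clashing: if w lies in B but not in B', then w violates the bound
  of some f \<in> F defining B', and the minimiser of f on B violates it too.\<close>

definition threshold_set :: "'a set \<Rightarrow> ('a \<Rightarrow> 'b::linorder) set \<Rightarrow> (('a \<Rightarrow> 'b) \<Rightarrow> 'b) \<Rightarrow> 'a set"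
  where "threshold_set V F b = {x \<in> V. \<forall>f\<in>F. b f \<le> f x}"

lemma NCTD_plus_le:
  assumes "positive_teaching_map \<B> T" "non_clashing \<B> T" "teaching_size_le \<B> T k"
  shows "NCTD_plus \<B> \<le> k"
  unfolding NCTD_plus_def using assms by (intro Least_le) blast

lemma arg_min_on_not_in_threshold_set:
  fixes F :: "('a \<Rightarrow> 'b::linorder) set"
  assumes "finite B" "w \<in> B" "w \<in> V" "w \<notin> threshold_set V F b"
  obtains f where "f \<in> F" "arg_min_on f B \<notin> threshold_set V F b"
proof -
  from assms(3,4) obtain f where f: "f \<in> F" "f w < b f"
    unfolding threshold_set_def by auto
  have "f (arg_min_on f B) \<le> f w"
    using assms(1,2) by (intro arg_min_least) auto
  then have "f (arg_min_on f B) < b f"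
    using f(2) by (rule le_less_trans)
  with f(1) have "arg_min_on f B \<notin> threshold_set V F b"
    unfolding threshold_set_def by (auto simp: not_le)
  with f(1) show thesis by (rule that)
qed

lemma NCTD_plus_threshold_family_le:
  fixes F :: "('a \<Rightarrow> 'b::linorder) set"
  assumes "finite F"
    and fin: "\<And>B. B \<in> \<B> \<Longrightarrow> finite B \<and> B \<noteq> {}"
    and thr: "\<And>B. B \<in> \<B> \<Longrightarrow> \<exists>b. B = threshold_set V F b"
  shows "NCTD_plus \<B> \<le> card F"
proof -
  define T where "T B = (\<lambda>f. arg_min_on f B) ` F" for B
  have T_sub: "T B \<subseteq> B" if "B \<in> \<B>" for B
    using fin[OF that] arg_min_if_finite(1) unfolding T_def by blast
  have T_escapes: "\<exists>t\<in>T B. t \<notin> B'"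
    if B: "B \<in> \<B>" and B': "B' \<in> \<B>" and w: "w \<in> B" "w \<notin> B'" for B B' w
  proof -
    obtain b where "B = threshold_set V F b" using thr[OF B] by blast
    with w(1) have "w \<in> V" unfolding threshold_set_def by blast
    obtain b' where B'_eq: "B' = threshold_set V F b'" using thr[OF B'] by blast
    obtain f where "f \<in> F" "arg_min_on f B \<notin> B'"
      using arg_min_on_not_in_threshold_set[of B w V F b'] fin[OF B] w \<open>w \<in> V\<close>
      unfolding B'_eq by blast
    then show ?thesis unfolding T_def by blast
  qed
  have "positive_teaching_map \<B> T"
    unfolding positive_teaching_map_def using T_sub by blast
  moreover have "non_clashing \<B> T"
    unfolding non_clashing_def distinguishes_def
  proof (intro ballI impI)
    fix B B' assume "B \<in> \<B>" "B' \<in> \<B>" "B \<noteq> B'"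
    then consider w where "w \<in> B" "w \<notin> B'" | w where "w \<in> B'" "w \<notin> B" by blast
    then show "\<exists>w \<in> T B \<union> T B'. (w \<in> B) \<noteq> (w \<in> B')"
      by cases (use T_escapes T_sub \<open>B \<in> \<B>\<close> \<open>B' \<in> \<B>\<close> in blast)+
  qed
  moreover have "teaching_size_le \<B> T (card F)"
    unfolding teaching_size_le_def T_def using \<open>finite F\<close> by (simp add: card_image_le)
  ultimately show ?thesis
    by (rule NCTD_plus_le)
qed

lemma unit_square_inter_iff:
  "unit_square a \<inter> unit_square b \<noteq> {} \<longleftrightarrow>
   \<bar>fst a - fst b\<bar> \<le> 1 \<and> \<bar>snd a - snd b\<bar> \<le> 1"
proof
  assume "unit_square a \<inter> unit_square b \<noteq> {}"
  then obtain p where "p \<in> unit_square a" "p \<in> unit_square b" by blast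
  then show "\<bar>fst a - fst b\<bar> \<le> 1 \<and> \<bar>snd a - snd b\<bar> \<le> 1"
    unfolding unit_square_def by auto
next
  assume "\<bar>fst a - fst b\<bar> \<le> 1 \<and> \<bar>snd a - snd b\<bar> \<le> 1"
  then have "(max (fst a) (fst b), max (snd a) (snd b)) \<in> unit_square a \<inter> unit_square b"
    unfolding unit_square_def by (auto simp: abs_le_iff)
  then show "unit_square a \<inter> unit_square b \<noteq> {}" by blast
qed

definition corner_coords :: "('v \<Rightarrow> real \<times> real) \<Rightarrow> ('v \<Rightarrow> real) set" where
  "corner_coords c =
     {\<lambda>u. fst (c u), \<lambda>u. - fst (c u), \<lambda>u. snd (c u), \<lambda>u. - snd (c u)}"

lemma card_corner_coords_le: "card (corner_coords c) \<le> 4"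
  unfolding corner_coords_def
  using card_length[of "[\<lambda>u. fst (c u), \<lambda>u. - fst (c u), \<lambda>u. snd (c u), \<lambda>u. - snd (c u)]"]
  by (simp only: list.set length_Cons list.size)

lemma closed_nbhd_usq_adj_eq_threshold_set:
  "closed_nbhd V (usq_adj c) v = threshold_set V (corner_coords c) (\<lambda>f. f v - 1)"
  unfolding closed_nbhd_def usq_adj_def unit_square_inter_iff threshold_set_def corner_coords_def
  by (auto simp: abs_le_iff)

theorem theorem8:
  fixes V :: "'v set" and c :: "'v \<Rightarrow> real \<times> real"
  assumes "finite V"
  shows "NCTD_plus ((\<lambda>v. closed_nbhd V (usq_adj c) v) ` V) \<le> 4"
proof -
  have "NCTD_plus ((\<lambda>v. closed_nbhd V (usq_adj c) v) ` V) \<le> card (corner_coords c)"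
  proof (rule NCTD_plus_threshold_family_le)
    show "finite (corner_coords c)"
      unfolding corner_coords_def by simp
    fix B assume "B \<in> (\<lambda>v. closed_nbhd V (usq_adj c) v) ` V"
    then obtain v where "v \<in> V" and B: "B = closed_nbhd V (usq_adj c) v" by blast
    then have "v \<in> B" unfolding closed_nbhd_def by simp
    moreover have "B \<subseteq> V" unfolding B closed_nbhd_def by blast
    ultimately show "finite B \<and> B \<noteq> {}"
      using assms finite_subset by blast
    show "\<exists>b. B = threshold_set V (corner_coords c) b"
      unfolding B closed_nbhd_usq_adj_eq_threshold_set by (rule exI, rule refl)
  qed
  then show ?thesis
    using card_corner_coords_le by (rule order_trans)
qed

end
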